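(* For each integer $\omega$, there is a proof labeling scheme $(\mathsf{P},\mathsf{V})$ of size $O(\log n)$ for the class of graphs of locally verifiable treewidth at most $\omega$.
   Context: An elimination tree of a connected graph $G$ is a rooted tree $F$ with $V(F)=V(G)$ such that for every edge $uv$ of $G$, one of $u,v$ is an ancestor of the other in $F$. For $v\in V(F)$ let $F_v$ be the subtree rooted at $v$ and $\mathsf{str}(v)$ the set consisting of $v$ and all strict ancestors of $v$ having a neighbour in $V(F_v)$; the width of $F$ is $\max_v|\mathsf{str}(v)|-1$. An oriented path system $\mathcal{P}$ over $G$ is a set of oriented paths, each obtained by orienting the edges of a path of $G$. The congestion of a vertex $v$ in $\mathcal{P}$ is the number of paths of $\mathcal{P}$ having $v$ as starting vertex or internal vertex (paths ending at $v$ are not counted); the congestion of $\mathcal{P}$ is the maximum over all vertices. $\mathcal{P}$ witnesses an elimination tree $F$ if for every vertex $v$ with parent $\mathsf{p}(v)$ in $F$, either $v\mathsf{p}(v)\in E(G)$ or $\mathcal{P}$ contains a path oriented from $v$ to $\mathsf{p}(v)$. A graph has locally verifiable treewidth at most $k$ if each connected component admits an elimination tree $F$ of width at most $k$ and an oriented path system of congestion at most $k$ witnessing $F$. Proof labeling scheme: vertices have unique identifiers in $\{1,\dots,n\}$; a prover assigns binary labels; the verifier at $v$ sees only $\mathsf{id}(v)$ and $(\mathsf{id}(w),\varphi(w))$ for $w\in N[v]$ and outputs Yes/No; completeness: on graphs of the class, the prover's labels make all vertices output Yes; soundness: on graphs outside the class, every labeling makes some vertex output No; size $O(\log n)$: all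 labels have length $O(\log n)$. *)

theory Defs
  imports Complex_Main
begin

text \<open>A finite simple graph whose vertices are identified with their identifiers
  1..n.  E is the (symmetric, irreflexive) adjacency relation.\<close>
definition graph :: "nat \<Rightarrow> (nat \<Rightarrow> nat \<Rightarrow> bool) \<Rightarrow> bool" where
  "graph n E \<longleftrightarrow> (\<forall>u v. E u v \<longrightarrow> u \<in> {1..n} \<and> v \<in> {1..n} \<and> E v u \<and> u \<noteq> v)"

definition component :: "nat \<Rightarrow> (nat \<Rightarrow> nat \<Rightarrow> bool) \<Rightarrow> nat \<Rightarrow> nat set" where
  "component n E x = {y \<in> {1..n}. (x, y) \<in> {(u, v). E u v}\<^sup>*}"

definition par_rel :: "nat set \<Rightarrow> (nat \<Rightarrow> nat option) \<Rightarrow> (nat \<times> nat) set" where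
  "par_rel C par = {(v, u). v \<in> C \<and> par v = Some u}"

definition rooted_tree :: "nat set \<Rightarrow> (nat \<Rightarrow> nat option) \<Rightarrow> nat \<Rightarrow> bool" where
  "rooted_tree C par r \<longleftrightarrow> r \<in> C \<and> par r = None \<and>
     (\<forall>v \<in> C - {r}. \<exists>u \<in> C. par v = Some u) \<and>
     (\<forall>v \<in> C. (v, r) \<in> (par_rel C par)\<^sup>*)"

definition anc :: "nat set \<Rightarrow> (nat \<Rightarrow> nat option) \<Rightarrow> nat \<Rightarrow> nat \<Rightarrow> bool" where
  "anc C par u v \<longleftrightarrow> (v, u) \<in> (par_rel C par)\<^sup>+"

definition elimination_tree :: "(nat \<Rightarrow> nat \<Rightarrow> bool) \<Rightarrow> nat set \<Rightarrow> (nat \<Rightarrow> nat option) \<Rightarrow> nat \<Rightarrow> bool" where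
  "elimination_tree E C par r \<longleftrightarrow> rooted_tree C par r \<and>
     (\<forall>u \<in> C. \<forall>v \<in> C. E u v \<longrightarrow> anc C par u v \<or> anc C par v u)"

definition subtree :: "nat set \<Rightarrow> (nat \<Rightarrow> nat option) \<Rightarrow> nat \<Rightarrow> nat set" where
  "subtree C par v = {w \<in> C. w = v \<or> anc C par v w}"

definition str :: "(nat \<Rightarrow> nat \<Rightarrow> bool) \<Rightarrow> nat set \<Rightarrow> (nat \<Rightarrow> nat option) \<Rightarrow> nat \<Rightarrow> nat set" where
  "str E C par v = {v} \<union> {u. anc C par u v \<and> (\<exists>w \<in> subtree C par v. E u w)}"

definition width_le :: "(nat \<Rightarrow> nat \<Rightarrow> bool) \<Rightarrow> nat set \<Rightarrow> (nat \<Rightarrow> nat option) \<Rightarrow> int \<Rightarrow> bool" where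
  "width_le E C par k \<longleftrightarrow> (\<forall>v \<in> C. int (card (str E C par v)) - 1 \<le> k)"

definition oriented_path :: "(nat \<Rightarrow> nat \<Rightarrow> bool) \<Rightarrow> nat set \<Rightarrow> nat list \<Rightarrow> bool" where
  "oriented_path E C p \<longleftrightarrow> p \<noteq> [] \<and> distinct p \<and> set p \<subseteq> C \<and>
     (\<forall>i. Suc i < length p \<longrightarrow> E (p ! i) (p ! Suc i))"

definition path_system :: "(nat \<Rightarrow> nat \<Rightarrow> bool) \<Rightarrow> nat set \<Rightarrow> nat list set \<Rightarrow> bool" where
  "path_system E C PS \<longleftrightarrow> (\<forall>p \<in> PS. oriented_path E C p)"

text \<open>congestion of v: number of paths having v as starting or internal vertex\<close>
definition congestion_at :: "nat list set \<Rightarrow> nat \<Rightarrow> nat" where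
  "congestion_at PS v = card {p \<in> PS. v \<in> set (butlast p)}"

definition congestion_le :: "nat set \<Rightarrow> nat list set \<Rightarrow> int \<Rightarrow> bool" where
  "congestion_le C PS k \<longleftrightarrow> (\<forall>v \<in> C. int (congestion_at PS v) \<le> k)"

definition witnesses :: "(nat \<Rightarrow> nat \<Rightarrow> bool) \<Rightarrow> nat set \<Rightarrow> nat list set \<Rightarrow> (nat \<Rightarrow> nat option) \<Rightarrow> bool" where
  "witnesses E C PS par \<longleftrightarrow> (\<forall>v \<in> C. \<forall>u. par v = Some u \<longrightarrow>
      E v u \<or> (\<exists>p \<in> PS. hd p = v \<and> last p = u))"

definition lv_treewidth_le :: "int \<Rightarrow> nat \<Rightarrow> (nat \<Rightarrow> nat \<Rightarrow> bool) \<Rightarrow> bool" where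
  "lv_treewidth_le k n E \<longleftrightarrow> (\<forall>x \<in> {1..n}. let C = component n E x in
     \<exists>par r PS. elimination_tree E C par r \<and> width_le E C par k \<and>
        path_system E C PS \<and> congestion_le C PS k \<and> witnesses E C PS par)"

definition local_view :: "(nat \<Rightarrow> nat \<Rightarrow> bool) \<Rightarrow> (nat \<Rightarrow> bool list) \<Rightarrow> nat \<Rightarrow> (nat \<times> bool list) set" where
  "local_view E \<phi> v = {(w, \<phi> w) | w. w = v \<or> E v w}"

definition proof_labeling_scheme ::
  "(nat \<Rightarrow> (nat \<Rightarrow> nat \<Rightarrow> bool) \<Rightarrow> bool) \<Rightarrow>
   (nat \<Rightarrow> (nat \<Rightarrow> nat \<Rightarrow> bool) \<Rightarrow> nat \<Rightarrow> bool list) \<Rightarrow>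
   (nat \<Rightarrow> (nat \<times> bool list) set \<Rightarrow> bool) \<Rightarrow> bool" where
  "proof_labeling_scheme cls P V \<longleftrightarrow>
     (\<forall>n E. graph n E \<and> cls n E \<longrightarrow> (\<forall>v \<in> {1..n}. V v (local_view E (P n E) v))) \<and>
     (\<forall>n E. graph n E \<and> \<not> cls n E \<longrightarrow> (\<forall>\<phi>. \<exists>v \<in> {1..n}. \<not> V v (local_view E \<phi> v)))"

text \<open>Labels of size O(log n) (written c * (log n + 1) to cover n = 1).\<close>
definition log_size :: "(nat \<Rightarrow> (nat \<Rightarrow> nat \<Rightarrow> bool) \<Rightarrow> bool) \<Rightarrow>
   (nat \<Rightarrow> (nat \<Rightarrow> nat \<Rightarrow> bool) \<Rightarrow> nat \<Rightarrow> bool list) \<Rightarrow> bool" where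
  "log_size cls P \<longleftrightarrow> (\<exists>c::real. \<forall>n E. graph n E \<and> cls n E \<longrightarrow>
     (\<forall>v \<in> {1..n}. real (length (P n E v)) \<le> c * (log 2 (real n) + 1)))"

end

theory Submission
  imports Defs "HOL-Library.Nat_Bijection" "HOL-Library.Transitive_Closure_Table"
begin

text \<open>The prover labels each vertex \<open>v\<close> with the identifier of \<open>v\<close>, of the root of its
  elimination tree and of its parent, the depth of \<open>v\<close>, the set \<open>str(v)\<close>, and one relay for
  every witness path through \<open>v\<close>; width and congestion at most \<open>\<omega>\<close> make this a bounded
  number of numbers below \<open>n + 2\<close>, hence \<open>O(log n)\<close> bits.
  If conversely all vertices accept, parent pointers strictly decrease the depth and so form a
  rooted tree on each component.  The local condition \<open>str(v) - {v} \<subseteq> str(parent v)\<close> lets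
  membership in the claimed sets propagate towards the root, so every edge joins an ancestor
  and a descendant and each true \<open>str(v)\<close> is contained in the claimed one, which bounds the
  width.  Relays with counters decreasing by one along edges trace witness paths to the
  parents, and at most \<open>\<omega>\<close> relays per vertex bound their congestion.\<close>

section \<open>Binary encodings of bounded numbers\<close>

fun nat_bits :: "nat \<Rightarrow> bool list" where
  "nat_bits m = (if m = 0 then [] else odd m # nat_bits (m div 2))"

declare nat_bits.simps [simp del]

fun nat_of_bits :: "bool list \<Rightarrow> nat" where
  "nat_of_bits [] = 0"
| "nat_of_bits (b # bs) = of_bool b + 2 * nat_of_bits bs"

lemma nat_of_bits_nat_bits [simp]: "nat_of_bits (nat_bits m) = m"
  by (induction m rule: nat_bits.induct) (subst nat_bits.simps, simp)

lemma inj_nat_bits: "inj nat_bits"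
  by (metis injI nat_of_bits_nat_bits)

lemma two_power_length_nat_bits: "0 < m \<Longrightarrow> 2 ^ length (nat_bits m) \<le> 2 * m"
proof (induction m rule: nat_bits.induct)
  case (1 m)
  then have "length (nat_bits m) = Suc (length (nat_bits (m div 2)))"
    by (subst nat_bits.simps) simp
  moreover have "nat_bits 0 = []"
    by (simp add: nat_bits.simps)
  ultimately show ?case
    using 1 by (cases "m div 2 = 0") auto
qed

lemma length_nat_bits_le_log:
  assumes "m \<le> M" "1 \<le> M"
  shows "real (length (nat_bits m)) \<le> log 2 (real M) + 2"
proof -
  have "2 ^ length (nat_bits m) \<le> 2 * M"
    using two_power_length_nat_bits[of m] assms
    by (cases "m = 0") (simp_all add: nat_bits.simps[of 0])
  then have "real (2 ^ length (nat_bits m)) \<le> real (2 * M)"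
    by (simp only: of_nat_le_iff)
  then have "(2::real) ^ length (nat_bits m) \<le> 2 ^ 2 * real M"
    using assms by simp
  then have "log 2 ((2::real) ^ length (nat_bits m)) \<le> log 2 (2 ^ 2 * real M)"
    using assms by (subst log_le_cancel_iff) auto
  moreover have "log 2 (4::real) = 2"
    using log_nat_power[of 2 2 2] by simp
  ultimately show ?thesis
    using assms by (simp add: log_mult log_nat_power)
qed

lemma list_encode_le_power:
  assumes "2 \<le> M" "\<forall>x\<in>set xs. x \<le> M"
  shows "list_encode xs \<le> M ^ 4 ^ length xs"
  using assms(2)
proof (induction xs)
  case (Cons x xs)
  define K where "K = M ^ 4 ^ length xs"
  have "M \<le> K"
    unfolding K_def using assms(1) by (intro self_le_power) auto
  then have K: "2 \<le> K" "x \<le> K" "list_encode xs \<le> K"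
    using assms(1) Cons by (auto simp: K_def)
  have "list_encode (x # xs) = Suc (triangle (x + list_encode xs) + x)"
    by (simp add: prod_encode_def)
  also have "\<dots> \<le> Suc (triangle (2 * K) + K)"
    unfolding triangle_def using K
    by (intro Suc_le_mono[THEN iffD2] add_mono div_le_mono mult_mono) auto
  also have "\<dots> = 2 * (K * K) + 2 * K + 1"
    by (simp add: triangle_def algebra_simps)
  also have "\<dots> \<le> (K * K) * (K * K)"
  proof -
    have "2 * K \<le> K * K" "4 \<le> K * K"
      using mult_le_mono1[OF K(1)] mult_le_mono[OF K(1) K(1)] by auto
    moreover have "4 * (K * K) \<le> (K * K) * (K * K)"
      using \<open>4 \<le> K * K\<close> by (rule mult_le_mono1)
    ultimately show ?thesis by linarith
  qed
  also have "\<dots> = K ^ 4"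
    by (simp add: power4_eq_xxxx)
  also have "\<dots> = M ^ 4 ^ length (x # xs)"
    by (simp add: K_def power_mult[symmetric] mult.commute)
  finally show ?case .
qed simp

lemma list_encode_le_power_power:
  assumes "2 \<le> M" "0 < a" "length xs \<le> m" "\<forall>x\<in>set xs. x \<le> M ^ a"
  shows "list_encode xs \<le> M ^ (a * 4 ^ m)"
proof -
  have "2 \<le> M ^ a"
    using assms(1,2) self_le_power[of M a] by simp
  then have "list_encode xs \<le> (M ^ a) ^ 4 ^ length xs"
    using assms(4) by (rule list_encode_le_power)
  also have "\<dots> \<le> M ^ (a * 4 ^ m)"
    unfolding power_mult[symmetric] using assms(1,3) by (intro power_increasing) auto
  finally show ?thesis .
qed

section \<open>Components and rooted trees\<close>

lemma graph_edgeD: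
  assumes "graph n E" "E u v"
  shows "u \<in> {1..n}" "v \<in> {1..n}" "E v u" "u \<noteq> v"
  using assms unfolding graph_def by blast+

lemma graph_reachable_in_range:
  assumes "graph n E" "E\<^sup>*\<^sup>* a b" "a \<in> {1..n}"
  shows "b \<in> {1..n}"
  using assms(2,3) by induction (auto dest: graph_edgeD[OF assms(1)])

lemma mem_component_iff: "v \<in> component n E x \<longleftrightarrow> v \<in> {1..n} \<and> E\<^sup>*\<^sup>* x v"
  unfolding component_def by (simp add: rtranclp_rtrancl_eq)

lemma self_mem_component: "x \<in> {1..n} \<Longrightarrow> x \<in> component n E x"
  by (simp add: mem_component_iff)

lemma component_subset: "component n E x \<subseteq> {1..n}"
  by (auto simp: mem_component_iff)

lemma component_closed:
  assumes "graph n E" "v \<in> component n E x" "E\<^sup>*\<^sup>* v y"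
  shows "y \<in> component n E x"
  using assms graph_reachable_in_range[OF assms(1)] by (meson mem_component_iff rtranclp_trans)

lemma component_eq:
  assumes "graph n E" "w \<in> component n E x"
  shows "component n E w = component n E x"
proof -
  have "symp E"
    using assms(1) by (auto intro: sympI dest: graph_edgeD)
  then have "E\<^sup>*\<^sup>* w x"
    using assms(2) by (metis mem_component_iff symp_rtranclp symp_def)
  then show ?thesis
    using assms(2) by (auto simp: mem_component_iff intro: rtranclp_trans)
qed

lemma rtrancl_path_walk:
  assumes "rtrancl_path R x xs y"
  shows "last (x # xs) = y"
    and "\<forall>i. Suc i < length (x # xs) \<longrightarrow> R ((x # xs) ! i) ((x # xs) ! Suc i)"
    and "\<forall>z\<in>set (x # xs). R\<^sup>*\<^sup>* x z"
    and "\<forall>z\<in>set (butlast (x # xs)). \<exists>w. R z w"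
  using assms
proof (induction rule: rtrancl_path.induct)
  case (step x y ys z)
  { case 1 show ?case using step by simp }
  { case 2 show ?case using step by (auto simp: nth_Cons split: nat.split) }
  { case 3 show ?case using step by (auto intro: converse_rtranclp_into_rtranclp) }
  { case 4 show ?case using step by auto }
qed simp_all

locale finite_rooted_tree =
  fixes C :: "nat set" and par :: "nat \<Rightarrow> nat option" and r :: nat
  assumes rooted: "rooted_tree C par r" and finite: "finite C"
begin

lemma root_in: "r \<in> C" and par_root: "par r = None"
  and par_exists: "v \<in> C - {r} \<Longrightarrow> \<exists>u\<in>C. par v = Some u"
  and reaches_root: "v \<in> C \<Longrightarrow> (v, r) \<in> (par_rel C par)\<^sup>*"
  using rooted unfolding rooted_tree_def by blast+

lemma par_SomeD: "v \<in> C \<Longrightarrow> par v = Some t \<Longrightarrow> t \<in> C"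
  using par_exists[of v] par_root by (cases "v = r") auto

lemma par_NoneD: "v \<in> C \<Longrightarrow> par v = None \<Longrightarrow> v = r"
  using par_exists[of v] by auto

lemma anc_in: "anc C par u v \<Longrightarrow> u \<in> C \<and> v \<in> C"
  unfolding anc_def by (induction rule: trancl_induct) (auto simp: par_rel_def dest: par_SomeD)

lemma not_anc_root: "\<not> anc C par u r"
  unfolding anc_def by (auto simp: par_rel_def par_root dest: tranclD)

lemma anc_irrefl: "\<not> anc C par v v"
proof
  assume "anc C par v v"
  then have loop: "(v, v) \<in> (par_rel C par)\<^sup>+" and "v \<in> C"
    using anc_in unfolding anc_def by blast+
  \<comment> \<open>The cycle through \<open>v\<close> is closed under parents, so it would pass through the root.\<close>
  have "(v, x) \<in> (par_rel C par)\<^sup>* \<Longrightarrow> (x, v) \<in> (par_rel C par)\<^sup>+" for x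
  proof (induction rule: rtrancl_induct)
    case (step x y)
    from tranclD[OF step(3)] obtain z where "(x, z) \<in> par_rel C par" "(z, v) \<in> (par_rel C par)\<^sup>*"
      by blast
    with step(2) have "(y, v) \<in> (par_rel C par)\<^sup>*"
      by (auto simp: par_rel_def)
    with loop show ?case
      by (metis rtrancl_into_trancl2 rtranclD trancl_rtrancl_trancl)
  qed (rule loop)
  then have "anc C par v r"
    using reaches_root[OF \<open>v \<in> C\<close>] unfolding anc_def .
  then show False
    using not_anc_root by blast
qed

lemma anc_parent: "v \<in> C \<Longrightarrow> par v = Some t \<Longrightarrow> anc C par t v"
  unfolding anc_def par_rel_def by auto

lemma anc_trans: "anc C par a b \<Longrightarrow> anc C par b c \<Longrightarrow> anc C par a c"
  unfolding anc_def by auto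

lemma anc_of_child:
  assumes "v \<in> C" "par v = Some t" "anc C par u v"
  shows "u = t \<or> anc C par u t"
proof -
  from tranclD[OF assms(3)[unfolded anc_def]] obtain z
    where "(v, z) \<in> par_rel C par" "(z, u) \<in> (par_rel C par)\<^sup>*"
    by blast
  moreover have "z = t"
    using calculation(1) assms(2) unfolding par_rel_def by auto
  ultimately show ?thesis
    unfolding anc_def by (auto dest: rtranclD)
qed

definition depth :: "nat \<Rightarrow> nat" where
  "depth v = card {u. anc C par u v}"

lemma depth_parent_less:
  assumes "v \<in> C" "par v = Some t"
  shows "depth t < depth v"
  unfolding depth_def
proof (rule psubset_card_mono)
  show "finite {u. anc C par u v}"
    using finite anc_in by (auto intro: finite_subset)
  show "{u. anc C par u t} \<subset> {u. anc C par u v}"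
    using anc_parent[OF assms] anc_trans anc_irrefl by blast
qed

lemma depth_le_card: "depth v \<le> card C"
  unfolding depth_def using finite anc_in by (intro card_mono) auto

lemma str_subset: "str E C par v \<subseteq> insert v C"
  unfolding str_def using anc_in by blast

lemma str_child_subset:
  assumes "v \<in> C" "par v = Some t"
  shows "str E C par v - {v} \<subseteq> str E C par t"
proof
  fix u assume "u \<in> str E C par v - {v}"
  then obtain w where uv: "anc C par u v" and "w \<in> subtree C par v" and "E u w"
    unfolding str_def by blast
  then have "w \<in> subtree C par t"
    using anc_parent[OF assms] anc_trans unfolding subtree_def by blast
  then show "u \<in> str E C par t"
    using anc_of_child[OF assms uv] \<open>E u w\<close> unfolding str_def by blast
qed

lemma str_root: "str E C par r = {r}"
  unfolding str_def using not_anc_root by auto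

end

section \<open>Labels and the verifier\<close>

text \<open>A relay \<open>(c, k)\<close> at \<open>v\<close> says that \<open>v\<close> lies on the witness path of the vertex with
  certificate \<open>c\<close>, \<open>k\<close> edges before its end.  The parent of the root is recorded as \<open>0\<close>,
  which is not an identifier.\<close>

datatype certificate =
  Certificate (cert_id: nat) (cert_root: nat) (cert_depth: nat) (cert_parent: nat)
    (cert_bag: "nat list")

datatype label = Label (label_cert: certificate) (label_relays: "(certificate \<times> nat) list")

definition cert_code :: "certificate \<Rightarrow> nat" where
  "cert_code c =
     list_encode [cert_id c, cert_root c, cert_depth c, cert_parent c, list_encode (cert_bag c)]"

definition relay_code :: "certificate \<times> nat \<Rightarrow> nat" where
  "relay_code ck = list_encode [cert_code (fst ck), snd ck]"

definition label_code :: "label \<Rightarrow> nat" where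
  "label_code l =
     list_encode [cert_code (label_cert l), list_encode (map relay_code (label_relays l))]"

definition label_bits :: "label \<Rightarrow> bool list" where
  "label_bits l = nat_bits (label_code l)"

lemma inj_cert_code: "inj cert_code"
  by (rule injI) (auto simp: cert_code_def list_encode_eq certificate.expand)

lemma inj_relay_code: "inj relay_code"
  using inj_cert_code
  by (intro injI) (auto simp: relay_code_def list_encode_eq prod_eq_iff dest: injD)

lemma inj_label_bits: "inj label_bits"
proof (rule injI)
  fix l l' assume "label_bits l = label_bits l'"
  then have "label_code l = label_code l'"
    unfolding label_bits_def by (rule injD[OF inj_nat_bits])
  then have "cert_code (label_cert l) = cert_code (label_cert l')"
    "map relay_code (label_relays l) = map relay_code (label_relays l')"
    by (auto simp: label_code_def list_encode_eq)
  then show "l = l'"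
    using inj_cert_code inj_relay_code by (metis injD inj_map_eq_map label.expand)
qed

definition cert_bounded :: "nat \<Rightarrow> nat \<Rightarrow> certificate \<Rightarrow> bool" where
  "cert_bounded M a c \<longleftrightarrow> cert_id c \<le> M \<and> cert_root c \<le> M \<and> cert_depth c \<le> M \<and>
     cert_parent c \<le> M \<and> (\<forall>x\<in>set (cert_bag c). x \<le> M) \<and> length (cert_bag c) \<le> a"

lemma cert_code_le:
  assumes "2 \<le> M" "cert_bounded M a c"
  shows "cert_code c \<le> M ^ (4 ^ a * 4 ^ 5)"
proof -
  have bag: "list_encode (cert_bag c) \<le> M ^ (1 * 4 ^ a)"
    using assms by (intro list_encode_le_power_power) (auto simp: cert_bounded_def)
  have "M \<le> M ^ 4 ^ a"
    using assms(1) by (intro self_le_power) auto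
  then show ?thesis
    unfolding cert_code_def using assms bag
    by (intro list_encode_le_power_power) (auto simp: cert_bounded_def)
qed

lemma label_code_le:
  assumes M: "2 \<le> M"
    and cert: "cert_bounded M a (label_cert l)"
    and relays: "\<forall>(c, k)\<in>set (label_relays l). cert_bounded M a c \<and> k \<le> M"
    and length_relays: "length (label_relays l) \<le> b"
  shows "label_code l \<le> M ^ (4 ^ a * 4 ^ 5 * 4 ^ 2 * 4 ^ b * 4 ^ 2)"
proof -
  let ?A = "4 ^ a * 4 ^ 5 :: nat"
  have relay_le: "relay_code ck \<le> M ^ (?A * 4 ^ 2)" if "ck \<in> set (label_relays l)" for ck
  proof -
    obtain c k where ck: "ck = (c, k)"
      by force
    have "M \<le> M ^ ?A"
      using M by (intro self_le_power) auto
    then show ?thesis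
      unfolding relay_code_def ck using that relays cert_code_le[OF M, of a c] ck
      by (intro list_encode_le_power_power[OF M]) auto
  qed
  have "list_encode (map relay_code (label_relays l)) \<le> M ^ (?A * 4 ^ 2 * 4 ^ b)"
    using relay_le length_relays by (intro list_encode_le_power_power[OF M]) auto
  moreover have "cert_code (label_cert l) \<le> M ^ (?A * 4 ^ 2 * 4 ^ b)"
  proof -
    have "?A \<le> ?A * (4 ^ 2 * 4 ^ b)"
      using mult_le_mono2[of 1 "4 ^ 2 * 4 ^ b" ?A] by simp
    then have "M ^ ?A \<le> M ^ (?A * 4 ^ 2 * 4 ^ b)"
      using M by (intro power_increasing) (simp_all add: mult.assoc)
    then show ?thesis
      using cert_code_le[OF M cert] by linarith
  qed
  ultimately show ?thesis
    unfolding label_code_def by (intro list_encode_le_power_power[OF M]) auto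
qed

lemma length_label_bits_le:
  assumes "1 \<le> n" "label_code l \<le> (n + 2) ^ X"
  shows "real (length (label_bits l)) \<le> (2 * real X + 2) * (log 2 (real n) + 1)"
proof -
  have "real (length (label_bits l)) \<le> log 2 (real ((n + 2) ^ X)) + 2"
    unfolding label_bits_def using assms by (intro length_nat_bits_le_log) auto
  also have "\<dots> = real X * log 2 (real n + 2) + 2"
    by (simp add: log_nat_power add.commute)
  also have "log 2 (real n + 2) \<le> log 2 (2 ^ 2 * real n)"
    using assms(1) by (subst log_le_cancel_iff) auto
  also have "\<dots> = 2 + log 2 (real n)"
    using assms(1) log_nat_power[of 2 2 2] by (simp add: log_mult)
  finally have "real (length (label_bits l)) \<le> real X * (2 + log 2 (real n)) + 2"
    by (simp add: mult_left_mono)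
  moreover have "0 \<le> log 2 (real n)"
    using assms(1) by simp
  moreover have "(2 * real X + 2) * (log 2 (real n) + 1) =
      real X * (2 + log 2 (real n)) + 2 + (real X * log 2 (real n) + 2 * log 2 (real n))"
    by (simp add: algebra_simps)
  ultimately show ?thesis
    by (smt (verit) mult_nonneg_nonneg of_nat_0_le_iff)
qed

definition parent_compatible :: "certificate \<Rightarrow> certificate \<Rightarrow> bool" where
  "parent_compatible c c' \<longleftrightarrow> cert_id c' = cert_parent c \<and> cert_root c' = cert_root c \<and>
     cert_depth c' < cert_depth c \<and> set (cert_bag c) - {cert_id c} \<subseteq> set (cert_bag c')"

definition local_check :: "int \<Rightarrow> nat \<Rightarrow> nat set \<Rightarrow> (nat \<Rightarrow> label) \<Rightarrow> bool" where
  "local_check \<omega> v N L \<longleftrightarrow>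
    cert_id (label_cert (L v)) = v \<and> v \<in> set (cert_bag (label_cert (L v))) \<and>
    int (length (cert_bag (label_cert (L v)))) \<le> \<omega> + 1 \<and>
    (cert_parent (label_cert (L v)) = 0 \<longrightarrow>
       cert_root (label_cert (L v)) = v \<and> set (cert_bag (label_cert (L v))) \<subseteq> {v}) \<and>
    (cert_parent (label_cert (L v)) \<noteq> 0 \<longrightarrow>
       cert_parent (label_cert (L v)) \<in> N \<and>
         parent_compatible (label_cert (L v)) (label_cert (L (cert_parent (label_cert (L v))))) \<or>
       (\<exists>k. (label_cert (L v), k) \<in> set (label_relays (L v)))) \<and>
    (\<forall>u\<in>N. cert_root (label_cert (L u)) = cert_root (label_cert (L v)) \<and>
       (u \<in> set (cert_bag (label_cert (L v))) \<or> v \<in> set (cert_bag (label_cert (L u))))) \<and>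
    int (length (label_relays (L v))) \<le> \<omega> \<and>
    (\<forall>c k. (c, k) \<in> set (label_relays (L v)) \<longrightarrow>
       (\<exists>y\<in>N. k = 1 \<and> y = cert_parent c \<and> parent_compatible c (label_cert (L y)) \<or>
              1 < k \<and> (c, k - 1) \<in> set (label_relays (L y))))"

lemma local_checkD:
  assumes "local_check \<omega> v N L"
  shows local_check_id: "cert_id (label_cert (L v)) = v"
    and local_check_self_in_bag: "v \<in> set (cert_bag (label_cert (L v)))"
    and local_check_bag_length: "int (length (cert_bag (label_cert (L v)))) \<le> \<omega> + 1"
    and local_check_root: "cert_parent (label_cert (L v)) = 0 \<Longrightarrow>
      cert_root (label_cert (L v)) = v \<and> set (cert_bag (label_cert (L v))) \<subseteq> {v}"
    and local_check_parent: "cert_parent (label_cert (L v)) \<noteq> 0 \<Longrightarrow>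
      cert_parent (label_cert (L v)) \<in> N \<and>
        parent_compatible (label_cert (L v)) (label_cert (L (cert_parent (label_cert (L v))))) \<or>
      (\<exists>k. (label_cert (L v), k) \<in> set (label_relays (L v)))"
    and local_check_neighbour: "u \<in> N \<Longrightarrow>
      cert_root (label_cert (L u)) = cert_root (label_cert (L v)) \<and>
      (u \<in> set (cert_bag (label_cert (L v))) \<or> v \<in> set (cert_bag (label_cert (L u))))"
    and local_check_relays_length: "int (length (label_relays (L v))) \<le> \<omega>"
    and local_check_relay: "(c, k) \<in> set (label_relays (L v)) \<Longrightarrow>
      \<exists>y\<in>N. k = 1 \<and> y = cert_parent c \<and> parent_compatible c (label_cert (L y)) \<or>
             1 < k \<and> (c, k - 1) \<in> set (label_relays (L y))"
  using assms unfolding local_check_def by blast+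

lemma local_check_cong:
  assumes "\<forall>w\<in>insert v N. L w = L' w"
  shows "local_check \<omega> v N L = local_check \<omega> v N L'"
proof -
  have "L v = L' v" "\<And>u. u \<in> N \<Longrightarrow> L u = L' u"
    using assms by simp_all
  then show ?thesis
    unfolding local_check_def by (auto 0 4)
qed

definition verifier :: "int \<Rightarrow> nat \<Rightarrow> (nat \<times> bool list) set \<Rightarrow> bool" where
  "verifier \<omega> v view \<longleftrightarrow> (\<forall>w b. (w, b) \<in> view \<longrightarrow> b \<in> range label_bits) \<and>
     local_check \<omega> v {w. w \<noteq> v \<and> (\<exists>b. (w, b) \<in> view)} (\<lambda>w. inv label_bits (SOME b. (w, b) \<in> view))"

lemma verifier_local_view:
  assumes "graph n E"
  shows "verifier \<omega> v (local_view E \<phi> v) \<longleftrightarrow>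
     (\<forall>w. w = v \<or> E v w \<longrightarrow> \<phi> w \<in> range label_bits) \<and>
     local_check \<omega> v {w. E v w} (\<lambda>w. inv label_bits (\<phi> w))"
proof -
  have view: "(w, b) \<in> local_view E \<phi> v \<longleftrightarrow> (w = v \<or> E v w) \<and> b = \<phi> w" for w b
    unfolding local_view_def by auto
  have "\<not> E v v"
    using graph_edgeD[OF assms] by blast
  then have "{w. w \<noteq> v \<and> (\<exists>b. (w, b) \<in> local_view E \<phi> v)} = {w. E v w}"
    by (auto simp: view)
  moreover have "\<forall>w\<in>insert v {w. E v w}.
      inv label_bits (SOME b. (w, b) \<in> local_view E \<phi> v) = inv label_bits (\<phi> w)"
    by (auto simp: view)
  ultimately show ?thesis
    unfolding verifier_def by (subst local_check_cong) (auto simp: view)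
qed

section \<open>Soundness\<close>

locale accepting_labelling =
  fixes \<omega> :: int and n :: nat and E :: "nat \<Rightarrow> nat \<Rightarrow> bool" and L :: "nat \<Rightarrow> label"
  assumes graph: "graph n E"
    and accepted: "\<forall>v\<in>{1..n}. local_check \<omega> v {w. E v w} L"
begin

abbreviation cert :: "nat \<Rightarrow> certificate" where
  "cert v \<equiv> label_cert (L v)"

abbreviation relays :: "nat \<Rightarrow> (certificate \<times> nat) list" where
  "relays v \<equiv> label_relays (L v)"

lemma check_at: "v \<in> {1..n} \<Longrightarrow> local_check \<omega> v {w. E v w} L"
  using accepted by blast

definition relay_edge :: "certificate \<Rightarrow> nat \<Rightarrow> nat \<Rightarrow> bool" where
  "relay_edge c a b \<longleftrightarrow> E a b \<and> (\<exists>k. (c, k) \<in> set (relays a))"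

lemma relay_reaches_parent:
  "x \<in> {1..n} \<Longrightarrow> (c, k) \<in> set (relays x) \<Longrightarrow>
    parent_compatible c (cert (cert_parent c)) \<and> cert_parent c \<in> {1..n} \<and>
    (relay_edge c)\<^sup>*\<^sup>* x (cert_parent c)"
proof (induction k arbitrary: x)
  case 0
  then show ?case
    using local_check_relay[OF check_at] by fastforce
next
  case (Suc k)
  from local_check_relay[OF check_at[OF Suc(2)] Suc(3)] obtain y where y: "E x y"
    and next_hop: "Suc k = 1 \<and> y = cert_parent c \<and> parent_compatible c (cert y) \<or>
      (c, k) \<in> set (relays y)"
    by auto
  have "y \<in> {1..n}" "relay_edge c x y"
    unfolding relay_edge_def using graph_edgeD[OF graph y] Suc(3) y by blast+
  with next_hop Suc.IH show ?case
    by (auto intro: converse_rtranclp_into_rtranclp)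
qed

lemma relay_edges_reachable: "(relay_edge c)\<^sup>*\<^sup>* a b \<Longrightarrow> E\<^sup>*\<^sup>* a b"
  by (induction rule: rtranclp_induct)
    (auto simp: relay_edge_def intro: rtranclp.rtrancl_into_rtrancl)

lemma parent_reachable:
  assumes "v \<in> {1..n}" "cert_parent (cert v) \<noteq> 0"
  shows "cert_parent (cert v) \<in> {1..n} \<and> parent_compatible (cert v) (cert (cert_parent (cert v))) \<and>
    E\<^sup>*\<^sup>* v (cert_parent (cert v))"
  using local_check_parent[OF check_at[OF assms(1)] assms(2)] graph_edgeD[OF graph]
    relay_reaches_parent[OF assms(1)] relay_edges_reachable by blast

end

locale accepting_labelling_component = accepting_labelling +
  fixes x0 :: nat
  assumes x0: "x0 \<in> {1..n}"
begin

definition C :: "nat set" where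
  "C = component n E x0"

lemma C_iff: "v \<in> C \<longleftrightarrow> v \<in> {1..n} \<and> E\<^sup>*\<^sup>* x0 v"
  unfolding C_def by (rule mem_component_iff)

lemma C_closed: "v \<in> C \<Longrightarrow> E\<^sup>*\<^sup>* v y \<Longrightarrow> y \<in> C"
  unfolding C_def using component_closed[OF graph] .

definition root :: nat where
  "root = cert_root (cert x0)"

lemma cert_root_eq_root: "v \<in> C \<Longrightarrow> cert_root (cert v) = root"
  unfolding C_iff
proof (elim conjE)
  assume "E\<^sup>*\<^sup>* x0 v"
  then show ?thesis
  proof (induction rule: rtranclp_induct)
    case (step a b)
    then show ?case
      using local_check_neighbour[OF check_at, of a b] graph_edgeD[OF graph step(2)] by auto
  qed (simp add: root_def)
qed

definition par :: "nat \<Rightarrow> nat option" where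
  "par v = (if cert_parent (cert v) = 0 then None else Some (cert_parent (cert v)))"

lemma par_SomeD:
  assumes "v \<in> C" "par v = Some t"
  shows "t \<in> C" "parent_compatible (cert v) (cert t)" "cert_depth (cert t) < cert_depth (cert v)"
    "t = cert_parent (cert v)"
proof -
  have t: "t = cert_parent (cert v)" "cert_parent (cert v) \<noteq> 0"
    using assms(2) unfolding par_def by (auto split: if_splits)
  with assms(1) show "t \<in> C" "parent_compatible (cert v) (cert t)" "t = cert_parent (cert v)"
    using parent_reachable C_closed C_iff by blast+
  then show "cert_depth (cert t) < cert_depth (cert v)"
    unfolding parent_compatible_def by blast
qed

lemma par_NoneD:
  assumes "v \<in> C" "par v = None"
  shows "v = root" "set (cert_bag (cert v)) \<subseteq> {v}"
proof -
  have "cert_parent (cert v) = 0"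
    using assms(2) unfolding par_def by (auto split: if_splits)
  then have "cert_root (cert v) = v \<and> set (cert_bag (cert v)) \<subseteq> {v}"
    using local_check_root[OF check_at] assms(1) C_iff by blast
  then show "v = root" "set (cert_bag (cert v)) \<subseteq> {v}"
    using cert_root_eq_root[OF assms(1)] by simp_all
qed

abbreviation parent_edges :: "(nat \<times> nat) set" where
  "parent_edges \<equiv> par_rel C par"

lemma parent_edgesD: "(a, b) \<in> parent_edges \<Longrightarrow> a \<in> C \<and> par a = Some b"
  unfolding par_rel_def by simp

lemma depth_less_if_anc: "anc C par u v \<Longrightarrow> cert_depth (cert u) < cert_depth (cert v)"
  unfolding anc_def by (induction rule: trancl_induct) (fastforce dest: parent_edgesD par_SomeD)+

lemma anc_in_C: "anc C par u v \<Longrightarrow> u \<in> C \<and> v \<in> C"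
  unfolding anc_def by (induction rule: trancl_induct) (auto dest: parent_edgesD par_SomeD)

lemma reaches_root: "v \<in> C \<Longrightarrow> (v, root) \<in> parent_edges\<^sup>*"
proof (induction "cert_depth (cert v)" arbitrary: v rule: less_induct)
  case less
  show ?case
  proof (cases "par v")
    case None
    then show ?thesis
      using par_NoneD less(2) by simp
  next
    case (Some t)
    note t = par_SomeD[OF less(2) Some]
    have "(v, t) \<in> parent_edges"
      unfolding par_rel_def using less(2) Some by simp
    moreover have "(t, root) \<in> parent_edges\<^sup>*"
      using less(1)[OF t(3) t(1)] .
    ultimately show ?thesis
      by (rule converse_rtrancl_into_rtrancl)
  qed
qed

lemma root_in_C: "root \<in> C"
proof -
  have "x0 \<in> C"
    using x0 C_iff by blast
  from reaches_root[OF this] show ?thesis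
    by (rule rtranclE) (use \<open>x0 \<in> C\<close> par_SomeD in \<open>auto dest: parent_edgesD\<close>)
qed

lemma par_root: "par root = None"
proof (rule ccontr)
  assume "par root \<noteq> None"
  then obtain t where t: "par root = Some t"
    by blast
  then have "t \<in> C" "cert_depth (cert t) < cert_depth (cert root)"
    using par_SomeD root_in_C by blast+
  moreover have "(t, root) \<in> parent_edges\<^sup>*"
    using reaches_root[OF \<open>t \<in> C\<close>] .
  ultimately show False
    using depth_less_if_anc[unfolded anc_def] by (metis less_asym rtranclD)
qed

lemma rooted_tree: "rooted_tree C par root"
  unfolding rooted_tree_def
  using root_in_C par_root par_NoneD par_SomeD reaches_root by (metis DiffE insertI1 option.exhaust)

lemma bag_member_is_anc:
  "v \<in> C \<Longrightarrow> u \<in> set (cert_bag (cert v)) \<Longrightarrow> u \<noteq> v \<Longrightarrow> anc C par u v"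
proof (induction "cert_depth (cert v)" arbitrary: v rule: less_induct)
  case less
  show ?case
  proof (cases "par v")
    case None
    then show ?thesis
      using par_NoneD less by auto
  next
    case (Some t)
    note t = par_SomeD[OF less(2) Some]
    have "u \<in> set (cert_bag (cert t))"
      using t(2) less(3,4) local_check_id[OF check_at] less(2) C_iff
      unfolding parent_compatible_def by blast
    moreover have "(v, t) \<in> parent_edges"
      unfolding par_rel_def using less(2) Some by simp
    ultimately show ?thesis
      using less(1)[OF t(3) t(1)] unfolding anc_def by (cases "u = t") auto
  qed
qed

lemma elimination_tree: "elimination_tree E C par root"
  unfolding elimination_tree_def
proof (intro conjI ballI impI)
  fix u v assume uv: "u \<in> C" "v \<in> C" "E u v"
  then have "u \<in> set (cert_bag (cert v)) \<or> v \<in> set (cert_bag (cert u))"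
    using local_check_neighbour[OF check_at, of v u] graph_edgeD[OF graph uv(3)] C_iff by blast
  then show "anc C par u v \<or> anc C par v u"
    using bag_member_is_anc graph_edgeD[OF graph uv(3)] uv by blast
qed (rule rooted_tree)

lemma bag_inherited:
  "w \<in> C \<Longrightarrow> w = v \<or> anc C par v w \<Longrightarrow> u \<in> set (cert_bag (cert w)) \<Longrightarrow>
    cert_depth (cert u) < cert_depth (cert v) \<Longrightarrow> u \<in> set (cert_bag (cert v))"
proof (induction "cert_depth (cert w)" arbitrary: w rule: less_induct)
  case less
  show ?case
  proof (cases "w = v")
    case False
    then have "(w, v) \<in> parent_edges\<^sup>+"
      using less(3) unfolding anc_def by simp
    then obtain w' where "(w, w') \<in> parent_edges" and w'v: "w' = v \<or> (w', v) \<in> parent_edges\<^sup>+"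
      by (cases rule: converse_tranclE) blast+
    then have "par w = Some w'"
      unfolding par_rel_def by simp
    note w' = par_SomeD[OF less(2) this]
    have "u \<noteq> w"
      using less(5) depth_less_if_anc[of v w] less(3) False by auto
    then have "u \<in> set (cert_bag (cert w'))"
      using w'(2) less(4) local_check_id[OF check_at] less(2) C_iff
      unfolding parent_compatible_def by blast
    then show ?thesis
      using less(1)[OF w'(3) w'(1)] w'v less(5) unfolding anc_def by blast
  qed (use less in simp)
qed

lemma str_subset_bag:
  assumes "v \<in> C"
  shows "str E C par v \<subseteq> set (cert_bag (cert v))"
proof
  fix u assume u: "u \<in> str E C par v"
  show "u \<in> set (cert_bag (cert v))"
  proof (cases "u = v")
    case True
    then show ?thesis
      using assms C_iff local_check_self_in_bag[OF check_at] by blast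
  next
    case False
    then obtain w where uv: "anc C par u v" and w: "w \<in> subtree C par v" and "E u w"
      using u unfolding str_def by blast
    have wv: "w \<in> C" "w = v \<or> anc C par v w"
      using w unfolding subtree_def by auto
    have "u \<in> C" "cert_depth (cert u) < cert_depth (cert v)"
      using uv anc_in_C depth_less_if_anc by blast+
    have "cert_depth (cert v) \<le> cert_depth (cert w)"
      using wv(2) depth_less_if_anc by fastforce
    then have "\<not> anc C par w u"
      using depth_less_if_anc \<open>cert_depth (cert u) < cert_depth (cert v)\<close> by fastforce
    then have "w \<notin> set (cert_bag (cert u))"
      using bag_member_is_anc[OF \<open>u \<in> C\<close>] graph_edgeD[OF graph \<open>E u w\<close>] by blast
    then have "u \<in> set (cert_bag (cert w))"
      using local_check_neighbour[OF check_at, of w u] graph_edgeD[OF graph \<open>E u w\<close>] by blast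
    then show ?thesis
      using bag_inherited[OF wv] \<open>cert_depth (cert u) < cert_depth (cert v)\<close> by blast
  qed
qed

lemma width: "width_le E C par \<omega>"
  unfolding width_le_def
proof
  fix v assume v: "v \<in> C"
  have "card (str E C par v) \<le> card (set (cert_bag (cert v)))"
    using str_subset_bag[OF v] by (simp add: card_mono)
  also have "\<dots> \<le> length (cert_bag (cert v))"
    by (rule card_length)
  finally show "int (card (str E C par v)) - 1 \<le> \<omega>"
    using v C_iff local_check_bag_length[OF check_at] by fastforce
qed

definition relay_path :: "nat \<Rightarrow> nat list \<Rightarrow> bool" where
  "relay_path s p \<longleftrightarrow> oriented_path E C p \<and> hd p = s \<and> last p = the (par s) \<and>
     (\<forall>z\<in>set (butlast p). \<exists>k. (cert s, k) \<in> set (relays z))"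

lemma relay_path_exists:
  assumes s: "s \<in> C" "par s = Some t" "\<not> E s t"
  shows "\<exists>p. relay_path s p"
proof -
  have "s \<in> {1..n}"
    using s C_iff by blast
  have t: "t = cert_parent (cert s)" "cert_parent (cert s) \<noteq> 0"
    using s(2) unfolding par_def by (auto split: if_splits)
  then obtain k where "(cert s, k) \<in> set (relays s)"
    using local_check_parent[OF check_at[OF \<open>s \<in> {1..n}\<close>]] s(3) by auto
  then have "(relay_edge (cert s))\<^sup>*\<^sup>* s t"
    using relay_reaches_parent[OF \<open>s \<in> {1..n}\<close>] t by simp
  then obtain xs where "rtrancl_path (relay_edge (cert s)) s xs t" "distinct (s # xs)"
    by (metis rtranclp_eq_rtrancl_path rtrancl_path_distinct)
  note walk = rtrancl_path_walk[OF this(1)] \<open>distinct (s # xs)\<close>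
  have "set (s # xs) \<subseteq> C"
    using walk(3) relay_edges_reachable C_closed s(1) by blast
  with walk s(2) have "relay_path s (s # xs)"
    unfolding relay_path_def oriented_path_def relay_edge_def by simp
  then show ?thesis ..
qed

definition relay_path_of :: "nat \<Rightarrow> nat list" where
  "relay_path_of s = (SOME p. relay_path s p)"

definition paths :: "nat list set" where
  "paths = relay_path_of ` {s \<in> C. par s \<noteq> None \<and> \<not> E s (the (par s))}"

lemma relay_path_relay_path_of:
  "s \<in> C \<Longrightarrow> par s \<noteq> None \<Longrightarrow> \<not> E s (the (par s)) \<Longrightarrow> relay_path s (relay_path_of s)"
  unfolding relay_path_of_def using relay_path_exists by (metis option.collapse someI_ex)

lemma path_system: "path_system E C paths"
  using relay_path_relay_path_of unfolding path_system_def paths_def relay_path_def by blast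

lemma witnesses: "witnesses E C paths par"
  unfolding witnesses_def
proof (intro ballI allI impI)
  fix v u assume v: "v \<in> C" and u: "par v = Some u"
  show "E v u \<or> (\<exists>p\<in>paths. hd p = v \<and> last p = u)"
  proof (cases "E v u")
    case False
    then have "relay_path v (relay_path_of v)" "relay_path_of v \<in> paths"
      using relay_path_relay_path_of v u unfolding paths_def by auto
    then show ?thesis
      using u unfolding relay_path_def by auto
  qed simp
qed

lemma congestion: "congestion_le C paths \<omega>"
  unfolding congestion_le_def congestion_at_def
proof
  fix z assume z: "z \<in> C"
  have "{p \<in> paths. z \<in> set (butlast p)} \<subseteq> relay_path_of ` cert_id ` fst ` set (relays z)"
  proof
    fix p assume "p \<in> {p \<in> paths. z \<in> set (butlast p)}"
    then obtain s where s: "s \<in> C" "par s \<noteq> None" "\<not> E s (the (par s))" "p = relay_path_of s"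
      and "z \<in> set (butlast p)"
      unfolding paths_def by auto
    then have "cert s \<in> fst ` set (relays z)"
      using relay_path_relay_path_of unfolding relay_path_def by force
    moreover have "cert_id (cert s) = s"
      using s(1) C_iff local_check_id[OF check_at] by blast
    ultimately show "p \<in> relay_path_of ` cert_id ` fst ` set (relays z)"
      using s(4) by force
  qed
  then have "card {p \<in> paths. z \<in> set (butlast p)} \<le>
      card (relay_path_of ` cert_id ` fst ` set (relays z))"
    by (intro card_mono) auto
  also have "\<dots> \<le> card (set (relays z))"
    by (meson card_image_le dual_order.trans finite_imageI finite_set)
  also have "\<dots> \<le> length (relays z)"
    by (rule card_length)
  finally show "int (card {p \<in> paths. z \<in> set (butlast p)}) \<le> \<omega>"
    using z C_iff local_check_relays_length[OF check_at] by fastforce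
qed

end

lemma (in accepting_labelling) lv_treewidth: "lv_treewidth_le \<omega> n E"
  unfolding lv_treewidth_le_def Let_def
proof
  fix x assume "x \<in> {1..n}"
  then interpret accepting_labelling_component \<omega> n E L x
    by unfold_locales
  show "\<exists>par r PS. elimination_tree E (component n E x) par r \<and> width_le E (component n E x) par \<omega> \<and>
      path_system E (component n E x) PS \<and> congestion_le (component n E x) PS \<omega> \<and>
      witnesses E (component n E x) PS par"
    using elimination_tree width path_system congestion witnesses unfolding C_def by blast
qed

section \<open>Completeness\<close>

definition parent_id :: "(nat \<Rightarrow> nat option) \<Rightarrow> nat \<Rightarrow> nat" where
  "parent_id par v = (case par v of None \<Rightarrow> 0 | Some t \<Rightarrow> t)"

definition canonical_cert ::
  "(nat \<Rightarrow> nat \<Rightarrow> bool) \<Rightarrow> nat set \<Rightarrow> (nat \<Rightarrow> nat option) \<Rightarrow> nat \<Rightarrow> nat \<Rightarrow> certificate" where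
  "canonical_cert E C par r v = Certificate v r (finite_rooted_tree.depth C par v) (parent_id par v)
     (sorted_list_of_set (str E C par v))"

definition witness_path :: "nat list set \<Rightarrow> (nat \<Rightarrow> nat option) \<Rightarrow> nat \<Rightarrow> nat list" where
  "witness_path PS par s = (SOME p. p \<in> PS \<and> hd p = s \<and> last p = the (par s))"

definition relay_set ::
  "(nat \<Rightarrow> nat \<Rightarrow> bool) \<Rightarrow> nat set \<Rightarrow> (nat \<Rightarrow> nat option) \<Rightarrow> nat \<Rightarrow> nat list set \<Rightarrow> nat \<Rightarrow>
   (certificate \<times> nat) set" where
  "relay_set E C par r PS x =
     {(canonical_cert E C par r s, length (witness_path PS par s) - 1 - i) | s i.
       s \<in> C \<and> par s \<noteq> None \<and> \<not> E s (the (par s)) \<and>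
       i < length (witness_path PS par s) - 1 \<and> witness_path PS par s ! i = x}"

definition canonical_label ::
  "(nat \<Rightarrow> nat \<Rightarrow> bool) \<Rightarrow> nat set \<Rightarrow> (nat \<Rightarrow> nat option) \<Rightarrow> nat \<Rightarrow> nat list set \<Rightarrow> nat \<Rightarrow> label" where
  "canonical_label E C par r PS x =
     Label (canonical_cert E C par r x) (SOME xs. distinct xs \<and> set xs = relay_set E C par r PS x)"

definition label_exponent :: "int \<Rightarrow> nat" where
  "label_exponent \<omega> = 4 ^ nat (\<omega> + 1) * 4 ^ 5 * 4 ^ 2 * 4 ^ nat \<omega> * 4 ^ 2"

locale certified_component =
  fixes \<omega> :: int and n :: nat and E :: "nat \<Rightarrow> nat \<Rightarrow> bool" and x0 :: nat
    and par :: "nat \<Rightarrow> nat option" and r :: nat and PS :: "nat list set"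
  assumes graph: "graph n E" and x0: "x0 \<in> {1..n}"
    and elimination_tree: "elimination_tree E (component n E x0) par r"
    and width: "width_le E (component n E x0) par \<omega>"
    and path_system: "path_system E (component n E x0) PS"
    and congestion: "congestion_le (component n E x0) PS \<omega>"
    and witnesses: "witnesses E (component n E x0) PS par"
begin

abbreviation C :: "nat set" where
  "C \<equiv> component n E x0"

sublocale finite_rooted_tree C par r
  using elimination_tree finite_subset[OF component_subset]
  by unfold_locales (auto simp: elimination_tree_def)

abbreviation cert :: "nat \<Rightarrow> certificate" where
  "cert \<equiv> canonical_cert E C par r"

abbreviation L :: "nat \<Rightarrow> label" where
  "L \<equiv> canonical_label E C par r PS"

lemma card_C: "card C \<le> n"
  using card_mono[OF _ component_subset] by fastforce

lemma C_edge_closed: "u \<in> C \<Longrightarrow> E u v \<Longrightarrow> v \<in> C"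
  using component_closed[OF graph] by blast

lemma cert_simps:
  "cert_id (cert v) = v" "cert_root (cert v) = r" "cert_depth (cert v) = depth v"
  "cert_parent (cert v) = parent_id par v"
  unfolding canonical_cert_def by simp_all

lemma set_cert_bag: "v \<in> C \<Longrightarrow> set (cert_bag (cert v)) = str E C par v"
  and length_cert_bag: "v \<in> C \<Longrightarrow> length (cert_bag (cert v)) = card (str E C par v)"
  using finite_subset[OF str_subset] finite unfolding canonical_cert_def by simp_all

lemma parent_compatible_cert:
  assumes "v \<in> C" "par v = Some t"
  shows "parent_compatible (cert v) (cert t)"
  unfolding parent_compatible_def cert_simps set_cert_bag[OF assms(1)]
    set_cert_bag[OF par_SomeD[OF assms]]
  using assms depth_parent_less str_child_subset by (simp add: parent_id_def)

lemma witness_path: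
  assumes "s \<in> C" "par s = Some t" "\<not> E s t"
  shows "witness_path PS par s \<in> PS" "hd (witness_path PS par s) = s"
    "last (witness_path PS par s) = t" "oriented_path E C (witness_path PS par s)"
    "2 \<le> length (witness_path PS par s)"
proof -
  have "\<exists>p. p \<in> PS \<and> hd p = s \<and> last p = the (par s)"
    using witnesses assms unfolding witnesses_def by auto
  then show p: "witness_path PS par s \<in> PS" "hd (witness_path PS par s) = s"
    "last (witness_path PS par s) = t"
    unfolding witness_path_def using assms(2) by (metis (mono_tags, lifting) option.sel someI_ex)+
  then show op: "oriented_path E C (witness_path PS par s)"
    using path_system unfolding path_system_def by blast
  have "s \<noteq> t"
    using anc_parent[OF assms(1,2)] anc_irrefl by blast
  with p op show "2 \<le> length (witness_path PS par s)"
    unfolding oriented_path_def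
    by (cases "witness_path PS par s") (auto split: if_splits simp: Suc_le_eq neq_Nil_conv)
qed

lemma length_path_le: "p \<in> PS \<Longrightarrow> length p \<le> card C"
proof -
  assume "p \<in> PS"
  then have "distinct p" "set p \<subseteq> C"
    using path_system unfolding path_system_def oriented_path_def by auto
  then show ?thesis
    using distinct_card card_mono[OF finite] by metis
qed

lemma finite_PS: "finite PS"
proof (rule finite_subset)
  show "PS \<subseteq> {xs. set xs \<subseteq> C \<and> length xs \<le> card C}"
    using length_path_le path_system unfolding path_system_def oriented_path_def by auto
  show "finite {xs. set xs \<subseteq> C \<and> length xs \<le> card C}"
    using finite_lists_length_le[OF finite] .
qed

lemma relay_setE:
  assumes "(c, k) \<in> relay_set E C par r PS x"
  obtains s t i where "s \<in> C" "par s = Some t" "\<not> E s t" "c = cert s"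
    "i < length (witness_path PS par s) - 1" "witness_path PS par s ! i = x"
    "k = length (witness_path PS par s) - 1 - i"
  using assms unfolding relay_set_def by auto

lemma relay_set_inj_on_paths:
  "inj_on (\<lambda>ck. witness_path PS par (cert_id (fst ck))) (relay_set E C par r PS x)"
proof (rule inj_onI)
  fix ck ck'
  assume rel: "ck \<in> relay_set E C par r PS x" "ck' \<in> relay_set E C par r PS x"
    and same_path:
      "witness_path PS par (cert_id (fst ck)) = witness_path PS par (cert_id (fst ck'))"
  obtain c k c' k' where ck: "ck = (c, k)" "ck' = (c', k')"
    by force
  obtain s t i where s: "s \<in> C" "par s = Some t" "\<not> E s t" "c = cert s"
    "i < length (witness_path PS par s) - 1" "witness_path PS par s ! i = x"
    "k = length (witness_path PS par s) - 1 - i"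
    using rel(1) unfolding ck by (rule relay_setE)
  obtain s' t' i' where s': "s' \<in> C" "par s' = Some t'" "\<not> E s' t'" "c' = cert s'"
    "i' < length (witness_path PS par s') - 1" "witness_path PS par s' ! i' = x"
    "k' = length (witness_path PS par s') - 1 - i'"
    using rel(2) unfolding ck by (rule relay_setE)
  have "s = hd (witness_path PS par s)"
    using witness_path(2)[OF s(1-3)] by simp
  also have "\<dots> = hd (witness_path PS par s')"
    using same_path by (simp add: ck s(4) s'(4) cert_simps)
  also have "\<dots> = s'"
    using witness_path(2)[OF s'(1-3)] .
  finally have "s = s'" .
  moreover have "distinct (witness_path PS par s)"
    using witness_path(4)[OF s(1-3)] unfolding oriented_path_def by blast
  ultimately have "i = i'"
    using s(5,6) s'(5,6) nth_eq_iff_index_eq[of "witness_path PS par s" i i'] by simp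
  show "ck = ck'"
    unfolding ck s(4,7) s'(4,7) \<open>s = s'\<close> \<open>i = i'\<close> ..
qed

lemma relay_set_paths:
  "(\<lambda>ck. witness_path PS par (cert_id (fst ck))) ` relay_set E C par r PS x \<subseteq>
     {p \<in> PS. x \<in> set (butlast p)}"
proof
  fix p assume "p \<in> (\<lambda>ck. witness_path PS par (cert_id (fst ck))) ` relay_set E C par r PS x"
  then obtain c k where "(c, k) \<in> relay_set E C par r PS x"
    and p: "p = witness_path PS par (cert_id c)"
    by auto
  from \<open>(c, k) \<in> relay_set E C par r PS x\<close> obtain s t i
    where s: "s \<in> C" "par s = Some t" "\<not> E s t" "c = cert s"
      "i < length (witness_path PS par s) - 1" "witness_path PS par s ! i = x"
    by (rule relay_setE)
  have "p = witness_path PS par s"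
    using p s(4) by (simp add: cert_simps)
  moreover have "butlast p ! i = x" "i < length (butlast p)"
    using s(5,6) by (simp_all add: \<open>p = witness_path PS par s\<close> nth_butlast)
  ultimately show "p \<in> {p \<in> PS. x \<in> set (butlast p)}"
    using witness_path(1)[OF s(1-3)] nth_mem by fastforce
qed

lemma finite_relay_set: "finite (relay_set E C par r PS x)"
proof -
  have "finite ((\<lambda>ck. witness_path PS par (cert_id (fst ck))) ` relay_set E C par r PS x)"
    using finite_subset[OF relay_set_paths] finite_PS by simp
  then show ?thesis
    using finite_imageD relay_set_inj_on_paths by blast
qed

lemma card_relay_set_le: "x \<in> C \<Longrightarrow> int (card (relay_set E C par r PS x)) \<le> \<omega>"
proof -
  assume "x \<in> C"
  have "card (relay_set E C par r PS x) \<le> congestion_at PS x"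
    unfolding congestion_at_def using finite_PS
    by (intro card_inj_on_le[OF relay_set_inj_on_paths relay_set_paths]) simp
  then show ?thesis
    using congestion \<open>x \<in> C\<close> unfolding congestion_le_def by fastforce
qed

lemma label_relays_L:
  "set (label_relays (L x)) = relay_set E C par r PS x" "distinct (label_relays (L x))"
proof -
  have "\<exists>xs. distinct xs \<and> set xs = relay_set E C par r PS x"
    using finite_distinct_list[OF finite_relay_set] by blast
  from someI_ex[OF this] show "set (label_relays (L x)) = relay_set E C par r PS x"
    "distinct (label_relays (L x))"
    unfolding canonical_label_def by simp_all
qed

lemma first_relay:
  assumes "s \<in> C" "par s = Some t" "\<not> E s t"
  shows "(cert s, length (witness_path PS par s) - 1) \<in> set (label_relays (L s))"
proof -
  note p = witness_path[OF assms]
  have "witness_path PS par s \<noteq> []"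
    using p(5) by auto
  then have "witness_path PS par s ! 0 = s"
    using p(2) hd_conv_nth by metis
  moreover have "0 < length (witness_path PS par s) - 1"
    using p(5) by simp
  ultimately have "(cert s, length (witness_path PS par s) - 1 - 0) \<in> relay_set E C par r PS s"
    unfolding relay_set_def using assms by (intro CollectI exI[of _ s] exI[of _ "0::nat"]) simp
  then show ?thesis
    by (simp add: label_relays_L)
qed

lemma label_cert_L: "label_cert (L v) = cert v"
  unfolding canonical_label_def by simp

lemma relay_next_hop:
  assumes "(c, k) \<in> set (label_relays (L v))"
  shows "\<exists>y\<in>{w. E v w}. k = 1 \<and> y = cert_parent c \<and> parent_compatible c (label_cert (L y)) \<or>
    1 < k \<and> (c, k - 1) \<in> set (label_relays (L y))"
proof -
  obtain s t i where s: "s \<in> C" "par s = Some t" "\<not> E s t" "c = cert s"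
    and i: "i < length (witness_path PS par s) - 1" "witness_path PS par s ! i = v"
    and k: "k = length (witness_path PS par s) - 1 - i"
    using assms unfolding label_relays_L by (rule relay_setE)
  let ?p = "witness_path PS par s"
  note p = witness_path[OF s(1-3)]
  have edge: "E v (?p ! Suc i)"
    using p(4) i unfolding oriented_path_def by auto
  show ?thesis
  proof (cases "k = 1")
    case True
    then have "Suc i = length ?p - 1"
      using k i by simp
    moreover have "?p \<noteq> []"
      using p(5) by auto
    ultimately have "?p ! Suc i = t"
      using p(3) last_conv_nth[of ?p] by simp
    moreover have "cert_parent c = t"
      using s(2,4) by (simp add: cert_simps parent_id_def)
    ultimately show ?thesis
      using edge True parent_compatible_cert[OF s(1,2)] s(4) by (auto simp: label_cert_L)
  next
    case False
    then have "Suc i < length ?p - 1"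
      using k i by simp
    then have "(c, length ?p - 1 - Suc i) \<in> relay_set E C par r PS (?p ! Suc i)"
      unfolding relay_set_def using s by (intro CollectI exI[of _ s] exI[of _ "Suc i"]) simp
    moreover have "length ?p - 1 - Suc i = k - 1"
      using k by simp
    ultimately show ?thesis
      using edge False k i by (auto simp: label_relays_L)
  qed
qed

lemma neighbour_cert:
  assumes "v \<in> C" "E v u"
  shows "u \<in> set (cert_bag (cert v)) \<or> v \<in> set (cert_bag (cert u))"
proof -
  have "u \<in> C" "E u v"
    using C_edge_closed assms graph_edgeD[OF graph assms(2)] by blast+
  then have "anc C par u v \<or> anc C par v u"
    using elimination_tree assms unfolding elimination_tree_def by blast
  then show ?thesis
    using assms \<open>u \<in> C\<close> \<open>E u v\<close> set_cert_bag unfolding str_def subtree_def by blast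
qed

lemma parent_id_eq_0_iff:
  assumes "v \<in> C"
  shows "parent_id par v = 0 \<longleftrightarrow> par v = None"
proof (cases "par v")
  case (Some t)
  then have "t \<in> {1..n}"
    using par_SomeD[OF assms] component_subset by blast
  then show ?thesis
    using Some by (simp add: parent_id_def)
qed (simp add: parent_id_def)

lemma local_check_L:
  assumes v: "v \<in> C"
  shows "local_check \<omega> v {w. E v w} L"
proof -
  have own: "cert_id (label_cert (L v)) = v" "v \<in> set (cert_bag (label_cert (L v)))"
    using set_cert_bag[OF v] by (simp_all add: label_cert_L cert_simps str_def)
  have bag_length: "int (length (cert_bag (label_cert (L v)))) \<le> \<omega> + 1"
    using width v unfolding width_le_def label_cert_L length_cert_bag[OF v] by fastforce
  have root: "cert_root (label_cert (L v)) = v \<and> set (cert_bag (label_cert (L v))) \<subseteq> {v}"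
    if "cert_parent (label_cert (L v)) = 0"
  proof -
    have "v = r"
      using that parent_id_eq_0_iff[OF v] par_NoneD[OF v] by (simp add: label_cert_L cert_simps)
    then show ?thesis
      using set_cert_bag[OF v] str_root by (simp add: label_cert_L cert_simps)
  qed
  have parent: "cert_parent (label_cert (L v)) \<in> {w. E v w} \<and>
      parent_compatible (label_cert (L v)) (label_cert (L (cert_parent (label_cert (L v))))) \<or>
      (\<exists>k. (label_cert (L v), k) \<in> set (label_relays (L v)))"
    if "cert_parent (label_cert (L v)) \<noteq> 0"
  proof -
    have "par v \<noteq> None"
      using that parent_id_eq_0_iff[OF v] by (simp add: label_cert_L cert_simps)
    then obtain t where t: "par v = Some t"
      by blast
    then have "cert_parent (label_cert (L v)) = t"
      by (simp add: label_cert_L cert_simps parent_id_def)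
    then show ?thesis
      using parent_compatible_cert[OF v t] first_relay[OF v t] by (auto simp: label_cert_L)
  qed
  have neighbours: "cert_root (label_cert (L u)) = cert_root (label_cert (L v)) \<and>
      (u \<in> set (cert_bag (label_cert (L v))) \<or> v \<in> set (cert_bag (label_cert (L u))))"
    if "u \<in> {w. E v w}" for u
    using neighbour_cert[OF v] that by (simp add: label_cert_L cert_simps)
  have relays_length: "int (length (label_relays (L v))) \<le> \<omega>"
    using card_relay_set_le[OF v] label_relays_L distinct_card by metis
  show ?thesis
    unfolding local_check_def
    using own bag_length root parent neighbours relays_length relay_next_hop by blast
qed

lemma cert_bounded_cert:
  assumes s: "s \<in> C"
  shows "cert_bounded (n + 2) (nat (\<omega> + 1)) (cert s)"
proof -
  have in_range: "v \<le> n + 2" if "v \<in> C" for v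
    using that component_subset by fastforce
  have "parent_id par s \<le> n + 2"
    using in_range par_SomeD[OF s] by (simp add: parent_id_def split: option.split)
  moreover have "depth s \<le> n + 2"
    using depth_le_card[of s] card_C by linarith
  moreover have "\<forall>x\<in>str E C par s. x \<le> n + 2"
    using in_range s str_subset[of E s] by blast
  moreover have "int (card (str E C par s)) \<le> \<omega> + 1"
    using width s unfolding width_le_def by fastforce
  then have "card (str E C par s) \<le> nat (\<omega> + 1)"
    by (simp add: le_nat_iff)
  ultimately show ?thesis
    unfolding cert_bounded_def cert_simps set_cert_bag[OF s] length_cert_bag[OF s]
    using in_range[OF s] in_range[OF root_in] by blast
qed

lemma label_code_L_le:
  assumes "v \<in> C"
  shows "label_code (L v) \<le> (n + 2) ^ label_exponent \<omega>"
  unfolding label_exponent_def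
proof (rule label_code_le)
  show "cert_bounded (n + 2) (nat (\<omega> + 1)) (label_cert (L v))"
    using cert_bounded_cert[OF assms] by (simp add: label_cert_L)
  show "\<forall>(c, k)\<in>set (label_relays (L v)). cert_bounded (n + 2) (nat (\<omega> + 1)) c \<and> k \<le> n + 2"
  proof clarify
    fix c k assume "(c, k) \<in> set (label_relays (L v))"
    then obtain s t i where s: "s \<in> C" "par s = Some t" "\<not> E s t" "c = cert s"
      and "k = length (witness_path PS par s) - 1 - i"
      unfolding label_relays_L by (rule relay_setE)
    moreover have "length (witness_path PS par s) \<le> n"
      using length_path_le[OF witness_path(1)[OF s(1-3)]] card_C by linarith
    ultimately show "cert_bounded (n + 2) (nat (\<omega> + 1)) c \<and> k \<le> n + 2"
      using cert_bounded_cert by simp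
  qed
  have "int (length (label_relays (L v))) \<le> \<omega>"
    using card_relay_set_le[OF assms] label_relays_L distinct_card by metis
  moreover from this have "0 \<le> \<omega>"
    by linarith
  ultimately show "length (label_relays (L v)) \<le> nat \<omega>"
    by (simp add: le_nat_iff)
qed simp

end

definition lv_witness ::
  "int \<Rightarrow> (nat \<Rightarrow> nat \<Rightarrow> bool) \<Rightarrow> nat set \<Rightarrow> (nat \<Rightarrow> nat option) \<times> nat \<times> nat list set \<Rightarrow> bool" where
  "lv_witness \<omega> E C = (\<lambda>(par, r, PS). elimination_tree E C par r \<and> width_le E C par \<omega> \<and>
     path_system E C PS \<and> congestion_le C PS \<omega> \<and> witnesses E C PS par)"

definition prover_label :: "int \<Rightarrow> nat \<Rightarrow> (nat \<Rightarrow> nat \<Rightarrow> bool) \<Rightarrow> nat \<Rightarrow> label" where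
  "prover_label \<omega> n E x = (case SOME w. lv_witness \<omega> E (component n E x) w of
     (par, r, PS) \<Rightarrow> canonical_label E (component n E x) par r PS x)"

lemma prover_label_certified:
  assumes "graph n E" "lv_treewidth_le \<omega> n E" "x \<in> {1..n}"
  obtains par r PS where "certified_component \<omega> n E x par r PS"
    "\<And>w. w \<in> component n E x \<Longrightarrow>
      prover_label \<omega> n E w = canonical_label E (component n E x) par r PS w"
proof -
  have "\<exists>w. lv_witness \<omega> E (component n E x) w"
    using assms(2,3) unfolding lv_treewidth_le_def lv_witness_def Let_def by fastforce
  then have "lv_witness \<omega> E (component n E x) (SOME w. lv_witness \<omega> E (component n E x) w)"
    by (rule someI_ex)
  moreover obtain par r PS where w: "(SOME w. lv_witness \<omega> E (component n E x) w) = (par, r, PS)"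
    by (metis prod.exhaust)
  ultimately have "certified_component \<omega> n E x par r PS"
    using assms unfolding lv_witness_def certified_component_def by auto
  moreover have "prover_label \<omega> n E w = canonical_label E (component n E x) par r PS w"
    if "w \<in> component n E x" for w
    unfolding prover_label_def component_eq[OF assms(1) that] w by simp
  ultimately show ?thesis
    using that by blast
qed

lemma prover_label_accepted:
  assumes "graph n E" "lv_treewidth_le \<omega> n E" "v \<in> {1..n}"
  shows "local_check \<omega> v {w. E v w} (prover_label \<omega> n E)"
    and "label_code (prover_label \<omega> n E v) \<le> (n + 2) ^ label_exponent \<omega>"
proof -
  obtain par r PS where "certified_component \<omega> n E v par r PS" and
    L: "\<And>w. w \<in> component n E v \<Longrightarrow>
      prover_label \<omega> n E w = canonical_label E (component n E v) par r PS w"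
    using prover_label_certified[OF assms] by blast
  then interpret certified_component \<omega> n E v par r PS
    by simp
  have v: "v \<in> C"
    using assms(3) by (rule self_mem_component)
  have "\<forall>w\<in>insert v {w. E v w}. prover_label \<omega> n E w = L w"
    using L v C_edge_closed by blast
  then show "local_check \<omega> v {w. E v w} (prover_label \<omega> n E)"
    using local_check_cong local_check_L[OF v] by blast
  show "label_code (prover_label \<omega> n E v) \<le> (n + 2) ^ label_exponent \<omega>"
    using label_code_L_le[OF v] L[OF v] by simp
qed

lemma verifier_complete:
  assumes "graph n E" "lv_treewidth_le \<omega> n E" "v \<in> {1..n}"
  shows "verifier \<omega> v (local_view E (\<lambda>w. label_bits (prover_label \<omega> n E w)) v)"
proof -
  have "(\<lambda>w. inv label_bits (label_bits (prover_label \<omega> n E w))) = prover_label \<omega> n E"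
    using inv_f_f[OF inj_label_bits] by simp
  then show ?thesis
    unfolding verifier_local_view[OF assms(1)] using prover_label_accepted(1)[OF assms] by simp
qed

lemma verifier_sound:
  assumes "graph n E" "\<forall>v\<in>{1..n}. verifier \<omega> v (local_view E \<phi> v)"
  shows "lv_treewidth_le \<omega> n E"
proof -
  have "accepting_labelling \<omega> n E (\<lambda>w. inv label_bits (\<phi> w))"
    using assms verifier_local_view by unfold_locales blast+
  then show ?thesis
    by (rule accepting_labelling.lv_treewidth)
qed

lemma prover_label_bits_length:
  assumes "graph n E" "lv_treewidth_le \<omega> n E" "v \<in> {1..n}"
  shows "real (length (label_bits (prover_label \<omega> n E v))) \<le>
    (2 * real (label_exponent \<omega>) + 2) * (log 2 (real n) + 1)"
  using assms prover_label_accepted(2) by (intro length_label_bits_le) auto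

theorem proposition6:
  fixes \<omega> :: int
  shows "\<exists>P V. proof_labeling_scheme (lv_treewidth_le \<omega>) P V \<and> log_size (lv_treewidth_le \<omega>) P"
proof (intro exI conjI)
  let ?P = "\<lambda>n E v. label_bits (prover_label \<omega> n E v)"
  show "proof_labeling_scheme (lv_treewidth_le \<omega>) ?P (verifier \<omega>)"
    unfolding proof_labeling_scheme_def using verifier_complete verifier_sound by blast
  show "log_size (lv_treewidth_le \<omega>) ?P"
    unfolding log_size_def using prover_label_bits_length by blast
qed

end
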